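(* Let $\Omega$ and $Y$ be proper subdomains of $\mathbb{C}$, let $s\in Y$, and suppose $\mathscr{C}_{\Omega}^{Y,s}(z)>0$ for all $z\in\Omega$. Then $\eta_\Omega(w)\geq \mathscr{C}_{\Omega}^{Y,s}(w)$ for every $w\in\Omega$.
   Context: $\mathbb{D}=\{z\in\mathbb{C}:|z|<1\}$. For domains $\Omega\subset\mathbb{C}$, $Y\subsetneq\mathbb{C}$, and points $w\in\Omega$, $s\in Y$, let $\mathcal{H}^s_w(\Omega,Y)$ be the set of holomorphic maps $h:\Omega\to Y$ with $h(w)=s$ and $h(z)\neq s$ for all $z\in\Omega\setminus\{w\}$. For a domain $Y\subsetneq\mathbb{C}$ and $v\in Y$, the Hurwitz density is $\eta_Y(v)=2/r_Y(v)$, where $r_Y(v)=\max\{h'(0): h:\mathbb{D}\to Y \text{ holomorphic},\ h(0)=v,\ h(z)\neq v \text{ for } z\in\mathbb{D}\setminus\{0\},\ h'(0)>0\}$. The Carathéodory density of the Hurwitz metric of $\Omega$ relative to $Y$ is $\mathscr{C}_{\Omega}^{Y,s}(w)=\sup\{\eta_Y(h(w))|h'(w)| : h\in\mathcal{H}^s_w(\Omega,Y)\}$ (defined to be $0$ if the family is empty). *)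

theory Defs
  imports "HOL-Complex_Analysis.Complex_Analysis"
begin

definition domain :: "complex set \<Rightarrow> bool" where
  "domain S \<longleftrightarrow> open S \<and> connected S \<and> S \<noteq> {}"

definition hurwitz_family :: "complex set \<Rightarrow> complex set \<Rightarrow> complex \<Rightarrow> complex \<Rightarrow> (complex \<Rightarrow> complex) set" where
  "hurwitz_family \<Omega> Y w s =
     {h. h holomorphic_on \<Omega> \<and> h ` \<Omega> \<subseteq> Y \<and> h w = s \<and> (\<forall>z\<in>\<Omega> - {w}. h z \<noteq> s)}"

definition hurwitz_radius :: "complex set \<Rightarrow> complex \<Rightarrow> real" where
  "hurwitz_radius Y v =
     Sup {Re (deriv h 0) | h. h \<in> hurwitz_family (ball 0 1) Y 0 v
                              \<and> Im (deriv h 0) = 0 \<and> Re (deriv h 0) > 0}"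

definition hurwitz_density :: "complex set \<Rightarrow> complex \<Rightarrow> real" where
  "hurwitz_density Y v = 2 / hurwitz_radius Y v"

definition caratheodory_hurwitz :: "complex set \<Rightarrow> complex set \<Rightarrow> complex \<Rightarrow> complex \<Rightarrow> real" where
  "caratheodory_hurwitz \<Omega> Y s w =
     (if hurwitz_family \<Omega> Y w s = {} then 0
      else Sup {hurwitz_density Y (h w) * norm (deriv h w) | h. h \<in> hurwitz_family \<Omega> Y w s})"

end

theory Submission
  imports Defs
begin

text \<open>
  For a map \<open>h\<close> in the Hurwitz family of \<open>\<Omega>\<close> relative to \<open>Y\<close> and any competitor \<open>g\<close> for
  \<open>r\<^sub>\<Omega>(w)\<close>, the composite \<open>h \<circ> g\<close>, precomposed with a rotation making its derivative positive,
  is a competitor for \<open>r\<^sub>Y(s)\<close>; hence \<open>|h'(w)| r\<^sub>\<Omega>(w) \<le> r\<^sub>Y(s)\<close>, which is the claimed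
  inequality for a single \<open>h\<close>. The suprema involved are finite because a map \<open>f\<close> of the unit disc
  into \<open>Y \<noteq> \<complex>\<close> taking the value \<open>v\<close> only at \<open>0\<close> has a square root of
  \<open>1 - (f - v)/(p - v)\<close>, \<open>p \<notin> Y\<close>, omitting two values, so Landau's theorem bounds \<open>f'(0)\<close>.
\<close>

lemma Landau_deriv_bound:
  fixes a :: complex and r :: real
  assumes "r > 0"
  obtains B where "\<And>f. \<lbrakk>f holomorphic_on ball 0 r; f 0 = a;
                        \<And>z. z \<in> ball 0 r \<Longrightarrow> f z \<noteq> 0 \<and> f z \<noteq> 1\<rbrakk> \<Longrightarrow> norm (deriv f 0) \<le> B"
proof -
  obtain R where R_pos: "\<And>z. 0 < R z"
    and Landau: "\<And>f. \<lbrakk>f holomorphic_on cball 0 (R (f 0));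
                      \<And>z. norm z \<le> R (f 0) \<Longrightarrow> f z \<noteq> 0 \<and> f z \<noteq> 1\<rbrakk> \<Longrightarrow> norm (deriv f 0) < 1"
    using Landau_Picard by metis
  define c where "c = r / (2 * R a)"
  have c: "c > 0" using assms R_pos by (simp add: c_def)
  have scaled: "norm (of_real c * z) < r" if "norm z \<le> R a" for z :: complex
  proof -
    have "norm (of_real c * z) \<le> c * R a" using c that by (simp add: norm_mult)
    also have "\<dots> < r" using assms R_pos by (simp add: c_def)
    finally show ?thesis .
  qed
  show thesis
  proof
    fix f assume holf: "f holomorphic_on ball 0 r" and f0: "f 0 = a"
      and omits: "\<And>z. z \<in> ball 0 r \<Longrightarrow> f z \<noteq> 0 \<and> f z \<noteq> 1"
    define F where "F = (\<lambda>w. f (of_real c * w))"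
    have F0: "F 0 = a" by (simp add: F_def f0)
    have "(\<lambda>w::complex. of_real c * w) ` cball 0 (R a) \<subseteq> ball 0 r" using scaled by (auto simp: dist_norm)
    then have holF: "F holomorphic_on cball 0 (R a)"
      using holomorphic_on_compose_gen[OF _ holf, of "\<lambda>w. of_real c * w"]
      by (auto simp: F_def o_def intro!: holomorphic_intros)
    have "norm (deriv F 0) < 1"
    proof (rule Landau)
      show "F holomorphic_on cball 0 (R (F 0))" using holF F0 by simp
      show "F z \<noteq> 0 \<and> F z \<noteq> 1" if "norm z \<le> R (F 0)" for z
        using omits scaled that F0 by (simp add: F_def)
    qed
    moreover have "deriv F 0 = of_real c * deriv f 0"
      using deriv_compose_linear[of f "of_real c" 0] holomorphic_on_imp_differentiable_at[OF holf] assms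
      by (simp add: F_def)
    ultimately have "c * norm (deriv f 0) < 1" using c by (simp add: norm_mult)
    then show "norm (deriv f 0) \<le> 2 * R a / r"
      using c assms R_pos by (simp add: c_def field_simps)
  qed
qed

lemma holomorphic_sqrt_normalized:
  assumes holg: "g holomorphic_on S" and S: "open S" "contractible S" "a \<in> S"
    and nz: "\<And>z. z \<in> S \<Longrightarrow> g z \<noteq> 0" and ga: "g a = 1"
  obtains \<psi> where "\<psi> holomorphic_on S" "\<And>z. z \<in> S \<Longrightarrow> g z = \<psi> z ^ 2" "\<psi> a = 1"
    "deriv g a = 2 * deriv \<psi> a"
proof -
  obtain \<phi> where hol\<phi>: "\<phi> holomorphic_on S" and sq\<phi>: "\<And>z. z \<in> S \<Longrightarrow> g z = \<phi> z ^ 2"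
    using contractible_imp_holomorphic_sqrt[OF holg \<open>contractible S\<close> nz] by blast
  define \<psi> where "\<psi> z = \<phi> a * \<phi> z" for z
  have \<phi>a: "\<phi> a ^ 2 = 1" using sq\<phi> S ga by metis
  have hol\<psi>: "\<psi> holomorphic_on S" unfolding \<psi>_def by (intro holomorphic_intros hol\<phi>)
  have sq\<psi>: "g z = \<psi> z ^ 2" if "z \<in> S" for z
    using sq\<phi>[OF that] \<phi>a by (simp add: \<psi>_def power_mult_distrib)
  have \<psi>a: "\<psi> a = 1" using \<phi>a by (simp add: \<psi>_def power2_eq_square)
  have "deriv g a = deriv (\<lambda>z. \<psi> z ^ 2) a"
    using hol\<psi> sq\<psi> S
    by (intro complex_derivative_transform_within_open[OF holg]) (auto intro!: holomorphic_intros)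
  also have "\<dots> = 2 * deriv \<psi> a"
    using holomorphic_derivI[OF hol\<psi> S(1,3)] \<psi>a
    by (intro DERIV_imp_deriv) (auto intro!: derivative_eq_intros)
  finally show thesis using that hol\<psi> sq\<psi> \<psi>a by blast
qed

lemma hurwitz_family_deriv_bounded:
  assumes "p \<notin> Y"
  obtains B where "\<And>f. f \<in> hurwitz_family (ball 0 1) Y 0 v \<Longrightarrow> norm (deriv f 0) \<le> B"
proof -
  obtain B where B: "\<And>F. \<lbrakk>F holomorphic_on ball 0 1; F 0 = -1;
                          \<And>z. z \<in> ball 0 1 \<Longrightarrow> F z \<noteq> 0 \<and> F z \<noteq> 1\<rbrakk> \<Longrightarrow> norm (deriv F 0) \<le> B"
    using Landau_deriv_bound[of 1 "-1"] by auto
  show thesis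
  proof
    fix f assume "f \<in> hurwitz_family (ball 0 1) Y 0 v"
    then have holf: "f holomorphic_on ball 0 1" and fY: "f ` ball 0 1 \<subseteq> Y" and f0: "f 0 = v"
      and fv: "\<And>z. z \<in> ball 0 1 \<Longrightarrow> f z = v \<Longrightarrow> z = 0"
      unfolding hurwitz_family_def by auto
    have pv: "p \<noteq> v" using fY f0 assms by force
    define g where "g z = 1 - (f z - v) / (p - v)" for z
    have holg: "g holomorphic_on ball 0 1" unfolding g_def by (intro holomorphic_intros holf) (use pv in auto)
    have g0_iff: "g z = 0 \<longleftrightarrow> f z = p" and g1_iff: "g z = 1 \<longleftrightarrow> f z = v" for z
      using pv by (auto simp: g_def field_simps)
    have gnz: "g z \<noteq> 0" if "z \<in> ball 0 1" for z
      using fY assms that unfolding g0_iff by blast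
    obtain \<psi> where hol\<psi>: "\<psi> holomorphic_on ball 0 1" and sq\<psi>: "\<And>z. z \<in> ball 0 1 \<Longrightarrow> g z = \<psi> z ^ 2"
      and \<psi>0: "\<psi> 0 = 1" and dg: "deriv g 0 = 2 * deriv \<psi> 0"
      using holomorphic_sqrt_normalized[OF holg open_ball convex_imp_contractible[OF convex_ball]
          centre_in_ball[THEN iffD2, OF zero_less_one] gnz] f0 g1_iff by metis
    txt \<open>The Hurwitz condition enters here: \<open>\<psi> z = -1\<close> gives \<open>f z = v\<close>, so \<open>z = 0\<close>, but \<open>\<psi> 0 = 1\<close>.\<close>
    have \<psi>_omits: "- \<psi> z \<noteq> 0 \<and> - \<psi> z \<noteq> 1" if z: "z \<in> ball 0 1" for z
    proof
      show "- \<psi> z \<noteq> 0" using gnz[OF z] sq\<psi>[OF z] by auto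
      show "- \<psi> z \<noteq> 1"
      proof
        assume \<psi>z: "- \<psi> z = 1"
        then have "\<psi> z = -1" by (simp add: minus_equation_iff)
        then have "g z = 1" using sq\<psi>[OF z] by simp
        then have "z = 0" using g1_iff fv[OF z] by simp
        then show False using \<psi>z \<psi>0 by simp
      qed
    qed
    have "norm (deriv (\<lambda>z. - \<psi> z) 0) \<le> B"
      using \<psi>_omits \<psi>0 by (intro B) (auto intro!: holomorphic_intros hol\<psi>)
    then have \<psi>'_bound: "norm (deriv \<psi> 0) \<le> B"
      using hol\<psi> by (simp add: holomorphic_on_imp_differentiable_at)
    have "deriv g 0 = - deriv f 0 / (p - v)"
      unfolding g_def using holomorphic_derivI[OF holf open_ball, of 0] pv
      by (intro DERIV_imp_deriv) (auto intro!: derivative_eq_intros)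
    then have "deriv f 0 = 2 * (v - p) * deriv \<psi> 0"
      using dg pv by (simp add: field_simps)
    then have "norm (deriv f 0) = 2 * norm (v - p) * norm (deriv \<psi> 0)"
      by (simp only: norm_mult norm_numeral)
    then show "norm (deriv f 0) \<le> 2 * norm (v - p) * B"
      using \<psi>'_bound by (simp add: mult_left_mono)
  qed
qed

definition hurwitz_radii :: "complex set \<Rightarrow> complex \<Rightarrow> real set" where
  "hurwitz_radii Y v = {Re (deriv h 0) | h. h \<in> hurwitz_family (ball 0 1) Y 0 v
                                          \<and> Im (deriv h 0) = 0 \<and> Re (deriv h 0) > 0}"

lemma hurwitz_radius_eq_Sup: "hurwitz_radius Y v = Sup (hurwitz_radii Y v)"
  unfolding hurwitz_radius_def hurwitz_radii_def ..

lemma hurwitz_radiiI: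
  assumes "h \<in> hurwitz_family (ball 0 1) Y 0 v" "deriv h 0 = of_real x" "x > 0"
  shows "x \<in> hurwitz_radii Y v"
  unfolding hurwitz_radii_def using assms by force

lemma hurwitz_radiiE:
  assumes "x \<in> hurwitz_radii Y v"
  obtains h where "h \<in> hurwitz_family (ball 0 1) Y 0 v" "deriv h 0 = of_real x" "x > 0"
  using assms unfolding hurwitz_radii_def by (auto simp: complex_eq_iff)

lemma bdd_above_hurwitz_radii:
  assumes "Y \<noteq> UNIV"
  shows "bdd_above (hurwitz_radii Y v)"
proof -
  obtain p where "p \<notin> Y" using assms by auto
  then obtain B where B: "\<And>f. f \<in> hurwitz_family (ball 0 1) Y 0 v \<Longrightarrow> norm (deriv f 0) \<le> B"
    using hurwitz_family_deriv_bounded by metis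
  show ?thesis
  proof (rule bdd_aboveI)
    fix x assume "x \<in> hurwitz_radii Y v"
    then obtain h where "h \<in> hurwitz_family (ball 0 1) Y 0 v" "deriv h 0 = of_real x" "x > 0"
      by (rule hurwitz_radiiE)
    then show "x \<le> B" using B[of h] by simp
  qed
qed

lemma ball_radius_in_hurwitz_radii:
  assumes "r > 0" "ball v r \<subseteq> Y"
  shows "r \<in> hurwitz_radii Y v"
proof (rule hurwitz_radiiI)
  show "(\<lambda>z. v + of_real r * z) \<in> hurwitz_family (ball 0 1) Y 0 v"
    unfolding hurwitz_family_def using assms
    by (auto intro!: holomorphic_intros simp: dist_norm norm_mult)
  show "deriv (\<lambda>z. v + of_real r * z) 0 = of_real r"
    by (auto intro!: DERIV_imp_deriv derivative_eq_intros)
qed (use assms in simp)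

lemma hurwitz_radius_pos:
  assumes "open Y" "Y \<noteq> UNIV" "v \<in> Y"
  shows "hurwitz_radius Y v > 0"
proof -
  obtain r where "r > 0" "ball v r \<subseteq> Y" using assms open_contains_ball by blast
  then have "r \<in> hurwitz_radii Y v" by (rule ball_radius_in_hurwitz_radii)
  then have "r \<le> hurwitz_radius Y v"
    unfolding hurwitz_radius_eq_Sup using bdd_above_hurwitz_radii[OF assms(2)] by (rule cSup_upper)
  with \<open>r > 0\<close> show ?thesis by simp
qed

lemma hurwitz_family_compose:
  assumes "g \<in> hurwitz_family A B a b" "h \<in> hurwitz_family B C b c"
  shows "h \<circ> g \<in> hurwitz_family A C a c"
  using assms unfolding hurwitz_family_def
  by (auto intro: holomorphic_on_compose_gen)

lemma rotation_in_hurwitz_family: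
  assumes "norm u = 1"
  shows "(\<lambda>z. u * z) \<in> hurwitz_family (ball 0 1) (ball 0 1) 0 0"
  using assms unfolding hurwitz_family_def by (auto intro!: holomorphic_intros simp: norm_mult)

lemma hurwitz_radius_contraction:
  assumes \<Omega>: "open \<Omega>" "\<Omega> \<noteq> UNIV" "w \<in> \<Omega>" and Y: "open Y" "Y \<noteq> UNIV"
    and h: "h \<in> hurwitz_family \<Omega> Y w s"
  shows "norm (deriv h w) * hurwitz_radius \<Omega> w \<le> hurwitz_radius Y s"
proof -
  have holh: "h holomorphic_on \<Omega>" and "s \<in> Y"
    using h \<open>w \<in> \<Omega>\<close> unfolding hurwitz_family_def by auto
  have rY: "hurwitz_radius Y s > 0" using hurwitz_radius_pos[OF Y \<open>s \<in> Y\<close>] .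
  define a where "a = deriv h w"
  show ?thesis
  proof (cases "a = 0")
    case True
    then show ?thesis using rY by (simp add: a_def)
  next
    case False
    have "hurwitz_radius \<Omega> w \<le> hurwitz_radius Y s / norm a"
      unfolding hurwitz_radius_eq_Sup[of \<Omega>]
    proof (rule cSup_least)
      show "hurwitz_radii \<Omega> w \<noteq> {}"
        using \<Omega> open_contains_ball ball_radius_in_hurwitz_radii by blast
      fix x assume "x \<in> hurwitz_radii \<Omega> w"
      then obtain g where g: "g \<in> hurwitz_family (ball 0 1) \<Omega> 0 w"
        and dg: "deriv g 0 = of_real x" and "x > 0"
        by (rule hurwitz_radiiE)
      define u where "u = cnj a / norm a"
      have "norm u = 1" using False by (simp add: u_def norm_divide)
      have au: "a * u = norm a"
        using False by (simp add: u_def complex_norm_square[symmetric] power2_eq_square)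
      define k where "k = h \<circ> (g \<circ> (\<lambda>z. u * z))"
      have k: "k \<in> hurwitz_family (ball 0 1) Y 0 s"
        unfolding k_def
        by (intro hurwitz_family_compose[OF _ h] hurwitz_family_compose[OF _ g]
            rotation_in_hurwitz_family \<open>norm u = 1\<close>)
      have holg: "g holomorphic_on ball 0 1" and g0: "g 0 = w"
        using g unfolding hurwitz_family_def by auto
      have dh: "(h has_field_derivative a) (at (g (u * 0)))"
        using holomorphic_derivI[OF holh \<Omega>(1,3)] g0 by (simp add: a_def)
      have dg': "(g has_field_derivative of_real x) (at (u * 0))"
        using holomorphic_derivI[OF holg open_ball, of 0] dg by simp
      have du: "((\<lambda>z. u * z) has_field_derivative u) (at 0)"
        by (auto intro!: derivative_eq_intros)
      have "(k has_field_derivative a * (of_real x * u)) (at 0)"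
        unfolding k_def o_def by (rule DERIV_chain2[OF dh DERIV_chain2[OF dg' du]])
      then have "deriv k 0 = of_real (norm a * x)"
        using au by (simp add: DERIV_imp_deriv algebra_simps)
      then have "norm a * x \<in> hurwitz_radii Y s"
        using k False \<open>x > 0\<close> by (intro hurwitz_radiiI) auto
      then have "norm a * x \<le> hurwitz_radius Y s"
        unfolding hurwitz_radius_eq_Sup using bdd_above_hurwitz_radii[OF Y(2)] by (rule cSup_upper)
      then show "x \<le> hurwitz_radius Y s / norm a"
        using False by (simp add: field_simps)
    qed
    then show ?thesis using False by (simp add: a_def field_simps)
  qed
qed

lemma hurwitz_density_contraction:
  assumes "open \<Omega>" "\<Omega> \<noteq> UNIV" "w \<in> \<Omega>" "open Y" "Y \<noteq> UNIV"
    and h: "h \<in> hurwitz_family \<Omega> Y w s"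
  shows "hurwitz_density Y (h w) * norm (deriv h w) \<le> hurwitz_density \<Omega> w"
proof -
  have "h w = s" "s \<in> Y" using h \<open>w \<in> \<Omega>\<close> unfolding hurwitz_family_def by auto
  have "hurwitz_radius \<Omega> w > 0" "hurwitz_radius Y s > 0"
    using hurwitz_radius_pos assms \<open>s \<in> Y\<close> by auto
  with hurwitz_radius_contraction[OF assms] \<open>h w = s\<close> show ?thesis
    unfolding hurwitz_density_def by (simp add: field_simps)
qed

theorem proposition3p8:
  fixes \<Omega> Y :: "complex set" and s :: complex
  assumes "domain \<Omega>" and "\<Omega> \<noteq> UNIV"
    and "domain Y" and "Y \<noteq> UNIV"
    and "s \<in> Y"
    and "\<forall>z\<in>\<Omega>. caratheodory_hurwitz \<Omega> Y s z > 0"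
  shows "\<forall>w\<in>\<Omega>. hurwitz_density \<Omega> w \<ge> caratheodory_hurwitz \<Omega> Y s w"
proof
  fix w assume "w \<in> \<Omega>"
  have "open \<Omega>" "open Y" using assms(1,3) unfolding domain_def by auto
  note contraction = hurwitz_density_contraction[OF \<open>open \<Omega>\<close> assms(2) \<open>w \<in> \<Omega>\<close> \<open>open Y\<close> assms(4)]
  have "hurwitz_density \<Omega> w > 0"
    using hurwitz_radius_pos[OF \<open>open \<Omega>\<close> assms(2) \<open>w \<in> \<Omega>\<close>] by (simp add: hurwitz_density_def)
  then show "hurwitz_density \<Omega> w \<ge> caratheodory_hurwitz \<Omega> Y s w"
    unfolding caratheodory_hurwitz_def using contraction by (auto intro!: cSup_least)
qed

end
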